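(* Let $(V,e)$ be a unital $\ast$-normed space. For $\varepsilon>0$ put $S_{\varepsilon}=V_{he}^{\ast}\cap\varepsilon\operatorname{ball}V^{\ast}$. Then for every $\varepsilon>1/\|e\|$ the unit ball of $V$ is equivalent to the absolute polar $S_{\varepsilon}^{\circ}$, i.e. there are reals $r,R>0$ with $rS_{\varepsilon}^{\circ}\subseteq\operatorname{ball}V\subseteq RS_{\varepsilon}^{\circ}$.
   Context: A $\ast$-normed space is a complex vector space $V$ with an involution $v\mapsto v^{\ast}$ and a norm with $\|v^{\ast}\|=\|v\|$ for all $v$. $V_h=\{v:v^{\ast}=v\}$. The dual $V^{\ast}$ carries the involution $\langle v,\varphi^{\ast}\rangle=\overline{\langle v^{\ast},\varphi\rangle}$; $V_h^{\ast}$ is the real space of bounded hermitian functionals ($\varphi^{\ast}=\varphi$). For a nonzero $e\in V_h$ put $V_{he}^{\ast}=\{y\in V_h^{\ast}:\langle e,y\rangle=1\}$ and $S=V_{he}^{\ast}\cap\operatorname{ball}V^{\ast}$. The element $e$ is a unit if $S\neq\varnothing$; then $(V,e)$ is called a unital $\ast$-normed space. For $A\subseteq V^{\ast}$, the absolute polar is $A^{\circ}=\{v\in V:|\langle v,a\rangle|\le 1\ \forall a\in A\}$. *)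

theory Defs
  imports "HOL-Analysis.Analysis"
begin

class scaleC =
  fixes scaleC :: "complex \<Rightarrow> 'a \<Rightarrow> 'a" (infixr \<open>*\<^sub>C\<close> 75)

class complex_vector = scaleC + real_vector +
  assumes scaleC_add_right: "a *\<^sub>C (x + y) = a *\<^sub>C x + a *\<^sub>C y"
    and scaleC_add_left: "(a + b) *\<^sub>C x = a *\<^sub>C x + b *\<^sub>C x"
    and scaleC_scaleC: "a *\<^sub>C (b *\<^sub>C x) = (a * b) *\<^sub>C x"
    and scaleC_one: "1 *\<^sub>C x = x"
    and scaleR_scaleC: "r *\<^sub>R x = (complex_of_real r) *\<^sub>C x"

class complex_normed_vector = complex_vector + real_normed_vector +
  assumes norm_scaleC: "norm (a *\<^sub>C x) = cmod a * norm x"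

definition star_normed :: "('v::complex_normed_vector \<Rightarrow> 'v) \<Rightarrow> bool" where
  "star_normed invol \<longleftrightarrow>
     (\<forall>x y. invol (x + y) = invol x + invol y) \<and>
     (\<forall>c x. invol (c *\<^sub>C x) = cnj c *\<^sub>C invol x) \<and>
     (\<forall>x. invol (invol x) = x) \<and>
     (\<forall>x. norm (invol x) = norm x)"

definition bounded_cfunctional :: "('v::complex_normed_vector \<Rightarrow> complex) \<Rightarrow> bool" where
  "bounded_cfunctional f \<longleftrightarrow>
     (\<forall>x y. f (x + y) = f x + f y) \<and>
     (\<forall>c x. f (c *\<^sub>C x) = c * f x) \<and>
     (\<exists>K. \<forall>x. cmod (f x) \<le> norm x * K)"

definition dual_star :: "('v \<Rightarrow> 'v) \<Rightarrow> ('v \<Rightarrow> complex) \<Rightarrow> ('v \<Rightarrow> complex)" where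
  "dual_star invol f = (\<lambda>v. cnj (f (invol v)))"

definition herm_dual :: "('v::complex_normed_vector \<Rightarrow> 'v) \<Rightarrow> ('v \<Rightarrow> complex) set" where
  "herm_dual invol = {f. bounded_cfunctional f \<and> dual_star invol f = f}"

definition herm_dual_e :: "('v::complex_normed_vector \<Rightarrow> 'v) \<Rightarrow> 'v \<Rightarrow> ('v \<Rightarrow> complex) set" where
  "herm_dual_e invol e = {f \<in> herm_dual invol. f e = 1}"

definition dual_ball :: "real \<Rightarrow> ('v::complex_normed_vector \<Rightarrow> complex) set" where
  "dual_ball \<epsilon> = {f. bounded_cfunctional f \<and> onorm f \<le> \<epsilon>}"

definition S_eps :: "('v::complex_normed_vector \<Rightarrow> 'v) \<Rightarrow> 'v \<Rightarrow> real \<Rightarrow> ('v \<Rightarrow> complex) set" where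
  "S_eps invol e \<epsilon> = herm_dual_e invol e \<inter> dual_ball \<epsilon>"

definition is_unit :: "('v::complex_normed_vector \<Rightarrow> 'v) \<Rightarrow> 'v \<Rightarrow> bool" where
  "is_unit invol e \<longleftrightarrow> e \<noteq> 0 \<and> invol e = e \<and> S_eps invol e 1 \<noteq> {}"

definition abs_polar :: "('v \<Rightarrow> complex) set \<Rightarrow> 'v set" where
  "abs_polar A = {v. \<forall>a\<in>A. cmod (a v) \<le> 1}"

end

theory Submission
  imports Defs
begin

text \<open>
  Every functional in \<open>S\<^sub>\<epsilon>\<close> has norm at most \<open>\<epsilon>\<close>, so the unit ball lies in \<open>\<epsilon> S\<^sub>\<epsilon>\<^sup>\<circ>\<close>.
  Conversely, Hahn--Banach and the splitting of a functional into hermitian real and imaginary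
  parts give, for every \<open>v\<close>, a hermitian functional \<open>H\<close> of norm at most one with
  \<open>\<parallel>v\<parallel> \<le> 2 \<bar>H v\<bar>\<close>, and also a state \<open>F\<^sub>0 \<in> S\<^bsub>1/\<parallel>e\<parallel>\<^esub>\<close>. Because \<open>\<epsilon> > 1/\<parallel>e\<parallel>\<close>, for some
  \<open>t > 0\<close> the perturbation \<open>F = F\<^sub>0 + t (H - H(e) F\<^sub>0)\<close> still lies in \<open>S\<^sub>\<epsilon>\<close>. Solving for \<open>H v\<close>
  gives \<open>t \<bar>H v\<bar> \<le> \<bar>F v\<bar> + \<bar>F\<^sub>0 v\<bar> (1 + t \<parallel>e\<parallel>) \<le> 2 + t \<parallel>e\<parallel>\<close> on \<open>S\<^sub>\<epsilon>\<^sup>\<circ>\<close>, a bound on \<open>\<parallel>v\<parallel>\<close>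
  independent of \<open>v\<close>.
\<close>

section \<open>Hahn--Banach for the norm\<close>

text \<open>Partial functionals are encoded by their graphs, so that extension is inclusion and
  Zorn's lemma applies directly.\<close>

definition norm_dominated_graph :: "('a::real_normed_vector \<times> real) set \<Rightarrow> bool" where
  "norm_dominated_graph G \<longleftrightarrow>
     (0, 0) \<in> G \<and>
     (\<forall>x a b. (x, a) \<in> G \<longrightarrow> (x, b) \<in> G \<longrightarrow> a = b) \<and>
     (\<forall>x a y b. (x, a) \<in> G \<longrightarrow> (y, b) \<in> G \<longrightarrow> (x + y, a + b) \<in> G) \<and>
     (\<forall>x a c. (x, a) \<in> G \<longrightarrow> (c *\<^sub>R x, c * a) \<in> G) \<and>
     (\<forall>x a. (x, a) \<in> G \<longrightarrow> a \<le> norm x)"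

lemma norm_dominated_graphD:
  assumes "norm_dominated_graph G"
  shows norm_dominated_graph_zero: "(0, 0) \<in> G"
    and norm_dominated_graph_functional: "(x, a) \<in> G \<Longrightarrow> (x, b) \<in> G \<Longrightarrow> a = b"
    and norm_dominated_graph_add: "(x, a) \<in> G \<Longrightarrow> (y, b) \<in> G \<Longrightarrow> (x + y, a + b) \<in> G"
    and norm_dominated_graph_scale: "(x, a) \<in> G \<Longrightarrow> (c *\<^sub>R x, c * a) \<in> G"
    and norm_dominated_graph_le_norm: "(x, a) \<in> G \<Longrightarrow> a \<le> norm x"
  using assms unfolding norm_dominated_graph_def by blast+

lemma norm_dominated_graph_span:
  fixes x0 :: "'a::real_normed_vector"
  shows "norm_dominated_graph {(c *\<^sub>R x0, c * norm x0) | c. True}"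
proof -
  have "c * norm x0 = d * norm x0" if "c *\<^sub>R x0 = d *\<^sub>R x0" for c d
    using that by (cases "x0 = 0") auto
  moreover have "c * norm x0 \<le> \<bar>c\<bar> * norm x0" for c
    by (simp add: mult_right_mono)
  ultimately show ?thesis
    unfolding norm_dominated_graph_def
    by (auto simp: scaleR_add_left[symmetric] distrib_right[symmetric])
qed

lemma norm_dominated_graph_Union:
  assumes "C \<noteq> {}" and "\<And>G. G \<in> C \<Longrightarrow> norm_dominated_graph G"
    and chain: "\<And>G H. G \<in> C \<Longrightarrow> H \<in> C \<Longrightarrow> G \<subseteq> H \<or> H \<subseteq> G"
  shows "norm_dominated_graph (\<Union>C)"
proof -
  have common: "\<exists>G\<in>C. p \<in> G \<and> q \<in> G" if "p \<in> \<Union>C" "q \<in> \<Union>C" for p q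
    using that chain by blast
  show ?thesis
    unfolding norm_dominated_graph_def
  proof (intro conjI allI impI)
    show "(0, 0) \<in> \<Union>C"
      using assms(1,2) norm_dominated_graph_zero by blast
    show "a = b" if "(x, a) \<in> \<Union>C" "(x, b) \<in> \<Union>C" for x a b
      using common[OF that] assms(2) norm_dominated_graph_functional by blast
    show "(x + y, a + b) \<in> \<Union>C" if "(x, a) \<in> \<Union>C" "(y, b) \<in> \<Union>C" for x a y b
      using common[OF that] assms(2) norm_dominated_graph_add by blast
    show "(c *\<^sub>R x, c * a) \<in> \<Union>C" if "(x, a) \<in> \<Union>C" for x a c
      using that assms(2) norm_dominated_graph_scale by blast
    show "a \<le> norm x" if "(x, a) \<in> \<Union>C" for x a
      using that assms(2) norm_dominated_graph_le_norm by blast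
  qed
qed

lemma norm_dominated_graph_extension_value:
  assumes G: "norm_dominated_graph G"
  obtains a where "\<And>m b t. (m, b) \<in> G \<Longrightarrow> b + t * a \<le> norm (m + t *\<^sub>R z)"
proof -
  have sep: "b - norm (m - z) \<le> norm (m' + z) - b'" if "(m, b) \<in> G" "(m', b') \<in> G" for m b m' b'
  proof -
    have "b + b' \<le> norm ((m - z) + (m' + z))"
      using norm_dominated_graph_le_norm[OF G norm_dominated_graph_add[OF G that]] by simp
    also have "\<dots> \<le> norm (m - z) + norm (m' + z)"
      by (rule norm_triangle_ineq)
    finally show ?thesis by simp
  qed
  \<comment> \<open>Any \<open>a\<close> between \<open>sup (b - \<parallel>m - z\<parallel>)\<close> and \<open>inf (\<parallel>m + z\<parallel> - b)\<close> works: the case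
    \<open>t \<noteq> 0\<close> reduces to \<open>t = \<plusminus>1\<close> by rescaling the graph point.\<close>
  define A where "A = {b - norm (m - z) | m b. (m, b) \<in> G}"
  define a where "a = Sup A"
  have "A \<noteq> {}"
    using norm_dominated_graph_zero[OF G] by (auto simp: A_def)
  moreover have "bdd_above A"
    using sep[OF _ norm_dominated_graph_zero[OF G]] by (auto simp: A_def bdd_above_def)
  ultimately have lower: "b - norm (m - z) \<le> a" and upper: "a \<le> norm (m + z) - b"
    if "(m, b) \<in> G" for m b
    using that sep unfolding a_def A_def by (auto intro!: cSup_upper cSup_least)
  have "b + t * a \<le> norm (m + t *\<^sub>R z)" if mb: "(m, b) \<in> G" for m b t
  proof (cases t "0 :: real" rule: linorder_cases)
    case less
    have "- b / t - norm (- (1 / t) *\<^sub>R m - z) \<le> a"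
      using lower[OF norm_dominated_graph_scale[OF G mb, of "- (1 / t)"]] by simp
    then have "- t * (- b / t - norm (- (1 / t) *\<^sub>R m - z)) \<le> - t * a"
      using less by (intro mult_left_mono) auto
    moreover have "- t * norm (- (1 / t) *\<^sub>R m - z) = norm (m + t *\<^sub>R z)"
    proof -
      have "(- t) *\<^sub>R (- (1 / t) *\<^sub>R m - z) = m + t *\<^sub>R z"
        using less by (simp add: scaleR_diff_right)
      then show ?thesis
        using less by (metis abs_of_pos neg_0_less_iff_less norm_scaleR)
    qed
    ultimately show ?thesis
      using less by (simp add: right_diff_distrib)
  next
    case equal
    then show ?thesis
      using norm_dominated_graph_le_norm[OF G mb] by simp
  next
    case greater
    have "a \<le> norm ((1 / t) *\<^sub>R m + z) - b / t"
      using upper[OF norm_dominated_graph_scale[OF G mb, of "1 / t"]] by simp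
    then have "t * a \<le> t * (norm ((1 / t) *\<^sub>R m + z) - b / t)"
      using greater by (intro mult_left_mono) auto
    moreover have "t * norm ((1 / t) *\<^sub>R m + z) = norm (m + t *\<^sub>R z)"
    proof -
      have "t *\<^sub>R ((1 / t) *\<^sub>R m + z) = m + t *\<^sub>R z"
        using greater by (simp add: scaleR_add_right)
      then show ?thesis
        using greater by (metis abs_of_pos norm_scaleR)
    qed
    ultimately show ?thesis
      using greater by (simp add: right_diff_distrib)
  qed
  then show thesis
    by (rule that)
qed

lemma norm_dominated_graph_extend:
  assumes G: "norm_dominated_graph G" and z: "z \<notin> fst ` G"
    and a: "\<And>m b t. (m, b) \<in> G \<Longrightarrow> b + t * a \<le> norm (m + t *\<^sub>R z)"
  shows "norm_dominated_graph {(m + t *\<^sub>R z, b + t * a) | m b t. (m, b) \<in> G}"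
    (is "norm_dominated_graph ?G'")
proof -
  have mem: "(m + t *\<^sub>R z, b + t * a) \<in> ?G'" if "(m, b) \<in> G" for m b t
    using that by blast
  show ?thesis
    unfolding norm_dominated_graph_def
  proof (intro conjI allI impI)
    show "(0, 0) \<in> ?G'"
      using mem[OF norm_dominated_graph_zero[OF G], of 0] by simp
  next
    fix x p q
    assume "(x, p) \<in> ?G'" "(x, q) \<in> ?G'"
    then obtain m b t m' b' t' where mb: "(m, b) \<in> G" "x = m + t *\<^sub>R z" "p = b + t * a"
      and mb': "(m', b') \<in> G" "x = m' + t' *\<^sub>R z" "q = b' + t' * a"
      by blast
    have diff: "(m - m', b - b') \<in> G"
      using norm_dominated_graph_add[OF G mb(1) norm_dominated_graph_scale[OF G mb'(1), of "-1"]]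
      by simp
    have "t = t'"
    proof (rule ccontr)
      assume "t \<noteq> t'"
      have "m - m' = (t' - t) *\<^sub>R z"
        using mb(2) mb'(2) by (simp add: algebra_simps)
      then have "(1 / (t' - t)) *\<^sub>R (m - m') = z"
        using \<open>t \<noteq> t'\<close> by simp
      then show False
        using norm_dominated_graph_scale[OF G diff] z by force
    qed
    moreover from this have "b = b'"
      using mb mb' norm_dominated_graph_functional[OF G] by simp
    ultimately show "p = q"
      using mb mb' by simp
  next
    fix x p y q
    assume "(x, p) \<in> ?G'" "(y, q) \<in> ?G'"
    then obtain m b t m' b' t' where "(m, b) \<in> G" "x = m + t *\<^sub>R z" "p = b + t * a"
      and "(m', b') \<in> G" "y = m' + t' *\<^sub>R z" "q = b' + t' * a"
      by blast
    then show "(x + y, p + q) \<in> ?G'"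
      using mem[OF norm_dominated_graph_add[OF G], of m b m' b' "t + t'"]
      by (simp add: algebra_simps)
  next
    fix x p c
    assume "(x, p) \<in> ?G'"
    then obtain m b t where "(m, b) \<in> G" "x = m + t *\<^sub>R z" "p = b + t * a"
      by blast
    then show "(c *\<^sub>R x, c * p) \<in> ?G'"
      using mem[OF norm_dominated_graph_scale[OF G], of m b c "c * t"]
      by (simp add: algebra_simps)
  next
    fix x p
    assume "(x, p) \<in> ?G'"
    then show "p \<le> norm x"
      using a by blast
  qed
qed

lemma norm_dominated_graph_extends_to_functional:
  fixes G0 :: "('a::real_normed_vector \<times> real) set"
  assumes "norm_dominated_graph G0"
  obtains g where "linear g" "\<And>x. \<bar>g x\<bar> \<le> norm x" "\<And>x a. (x, a) \<in> G0 \<Longrightarrow> g x = a"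
proof -
  let ?A = "{G. norm_dominated_graph G \<and> G0 \<subseteq> G}"
  have "\<exists>M\<in>?A. \<forall>X\<in>?A. M \<subseteq> X \<longrightarrow> X = M"
  proof (rule subset_Zorn_nonempty)
    show "?A \<noteq> {}"
      using assms by blast
    show "\<Union>C \<in> ?A" if "C \<noteq> {}" "subset.chain ?A C" for C
      using that norm_dominated_graph_Union[of C] unfolding subset_chain_def by blast
  qed
  then obtain G where "G \<in> ?A" and "\<forall>X\<in>?A. G \<subseteq> X \<longrightarrow> X = G"
    by blast
  then have G: "norm_dominated_graph G" "G0 \<subseteq> G"
    and maximal: "\<And>X. norm_dominated_graph X \<Longrightarrow> G \<subseteq> X \<Longrightarrow> X = G"
    by auto
  have total: "\<exists>a. (x, a) \<in> G" for x
  proof (rule ccontr)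
    assume "\<nexists>a. (x, a) \<in> G"
    then have x: "x \<notin> fst ` G"
      by force
    obtain a where a: "\<And>m b t. (m, b) \<in> G \<Longrightarrow> b + t * a \<le> norm (m + t *\<^sub>R x)"
      using norm_dominated_graph_extension_value[OF G(1)] by blast
    let ?G' = "{(m + t *\<^sub>R x, b + t * a) | m b t. (m, b) \<in> G}"
    have mem: "(m + t *\<^sub>R x, b + t * a) \<in> ?G'" if "(m, b) \<in> G" for m b t
      using that by blast
    have "G \<subseteq> ?G'"
      using mem[of _ _ 0] by auto
    moreover have "norm_dominated_graph ?G'"
      using norm_dominated_graph_extend[OF G(1) x a] .
    ultimately have "?G' = G"
      using maximal by blast
    moreover have "(x, a) \<in> ?G'"
      using mem[OF norm_dominated_graph_zero[OF G(1)], of 1] by simp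
    ultimately show False
      using x by (metis fst_conv image_eqI)
  qed
  define g where "g x = (SOME a. (x, a) \<in> G)" for x
  have graph: "(x, g x) \<in> G" for x
    unfolding g_def using total by (rule someI_ex)
  have g_eq: "g x = a" if "(x, a) \<in> G" for x a
    using norm_dominated_graph_functional[OF G(1) graph that] .
  show thesis
  proof
    show "linear g"
    proof (rule linearI)
      show "g (x + y) = g x + g y" for x y
        using g_eq[OF norm_dominated_graph_add[OF G(1) graph graph]] .
      show "g (c *\<^sub>R x) = c *\<^sub>R g x" for c x
        using g_eq[OF norm_dominated_graph_scale[OF G(1) graph]] by simp
    qed
    show "\<bar>g x\<bar> \<le> norm x" for x
      using norm_dominated_graph_le_norm[OF G(1) graph[of x]]
        norm_dominated_graph_le_norm[OF G(1) norm_dominated_graph_scale[OF G(1) graph[of x], of "-1"]]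
      by simp
    show "g x = a" if "(x, a) \<in> G0" for x a
      using that G(2) g_eq by blast
  qed
qed

lemma exists_norming_functional:
  fixes x0 :: "'a::real_normed_vector"
  obtains g where "linear g" "\<And>x. \<bar>g x\<bar> \<le> norm x" "g x0 = norm x0"
proof -
  obtain g where "linear g" "\<And>x. \<bar>g x\<bar> \<le> norm x"
    and "\<And>x a. (x, a) \<in> {(c *\<^sub>R x0, c * norm x0) | c. True} \<Longrightarrow> g x = a"
    using norm_dominated_graph_extends_to_functional[OF norm_dominated_graph_span] by blast
  moreover have "(x0, norm x0) \<in> {(c *\<^sub>R x0, c * norm x0) | c. True}"
    by (force intro: exI[of _ 1])
  ultimately show thesis
    using that by blast
qed

section \<open>Complex-linear and hermitian functionals\<close>

lemma cnj_sgn_mult_self: "cnj (sgn z) * z = complex_of_real (cmod z)"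
  by (cases "z = 0")
     (simp_all add: sgn_eq complex_cnj_divide mult.commute[of _ z] complex_norm_square[symmetric]
       power2_eq_square)

definition clinear :: "('v::complex_vector \<Rightarrow> complex) \<Rightarrow> bool" where
  "clinear f \<longleftrightarrow> (\<forall>x y. f (x + y) = f x + f y) \<and> (\<forall>c x. f (c *\<^sub>C x) = c * f x)"

lemma clinearD:
  assumes "clinear f"
  shows clinear_add: "f (x + y) = f x + f y"
    and clinear_scaleC: "f (c *\<^sub>C x) = c * f x"
  using assms unfolding clinear_def by blast+

lemma scaleC_eq_Re_Im:
  fixes y :: "'v::complex_vector"
  shows "c *\<^sub>C y = Re c *\<^sub>R y + Im c *\<^sub>R (\<i> *\<^sub>C y)"
proof -
  have "complex_of_real (Re c) + complex_of_real (Im c) * \<i> = c"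
    by (simp add: complex_eq_iff)
  then have "c *\<^sub>C y = (complex_of_real (Re c) + complex_of_real (Im c) * \<i>) *\<^sub>C y"
    by simp
  also have "\<dots> = complex_of_real (Re c) *\<^sub>C y + (complex_of_real (Im c) * \<i>) *\<^sub>C y"
    by (rule scaleC_add_left)
  finally show ?thesis
    by (simp add: scaleR_scaleC scaleC_scaleC)
qed

lemma clinear_complexification:
  fixes g :: "'v::complex_vector \<Rightarrow> real"
  assumes g: "linear g"
  shows "clinear (\<lambda>y. Complex (g y) (- g (\<i> *\<^sub>C y)))"
proof -
  have Re_Im: "g (c *\<^sub>C y) = Re c * g y + Im c * g (\<i> *\<^sub>C y)" for c y
    by (subst scaleC_eq_Re_Im) (simp add: linear_add[OF g] linear_scale[OF g])
  have Re_Im_rotated: "g (\<i> *\<^sub>C (c *\<^sub>C y)) = - Im c * g y + Re c * g (\<i> *\<^sub>C y)" for c y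
    using Re_Im[of "\<i> * c" y] by (simp add: scaleC_scaleC)
  show ?thesis
    unfolding clinear_def
  proof (intro conjI allI)
    show "Complex (g (x + y)) (- g (\<i> *\<^sub>C (x + y))) =
        Complex (g x) (- g (\<i> *\<^sub>C x)) + Complex (g y) (- g (\<i> *\<^sub>C y))" for x y
      by (simp add: linear_add[OF g] scaleC_add_right complex_eq_iff)
    show "Complex (g (c *\<^sub>C y)) (- g (\<i> *\<^sub>C (c *\<^sub>C y))) = c * Complex (g y) (- g (\<i> *\<^sub>C y))"
      for c y
      by (simp only: Re_Im[of c y] Re_Im_rotated[of c y]) (simp add: complex_eq_iff algebra_simps)
  qed
qed

lemma cmod_le_norm_if_Re_le_norm:
  fixes G :: "'v::complex_normed_vector \<Rightarrow> complex"
  assumes G: "clinear G" and Re: "\<And>y. Re (G y) \<le> norm y"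
  shows "cmod (G y) \<le> norm y"
proof -
  \<comment> \<open>Rotate \<open>y\<close> so that \<open>G\<close> becomes real and nonnegative there.\<close>
  define w where "w = cnj (sgn (G y)) *\<^sub>C y"
  have "complex_of_real (cmod (G y)) = G w"
    unfolding w_def clinear_scaleC[OF G] by (rule cnj_sgn_mult_self[symmetric])
  then have "cmod (G y) = Re (G w)"
    by (metis Re_complex_of_real)
  also have "\<dots> \<le> norm w"
    by (rule Re)
  also have "\<dots> \<le> norm y"
    by (simp add: w_def norm_scaleC norm_sgn mult_left_le_one_le)
  finally show ?thesis .
qed

lemma exists_complex_norming_functional:
  fixes x0 :: "'v::complex_normed_vector"
  obtains G where "clinear G" "\<And>x. cmod (G x) \<le> norm x" "G x0 = complex_of_real (norm x0)"
proof -
  obtain g where g: "linear g" "\<And>x. \<bar>g x\<bar> \<le> norm x" "g x0 = norm x0"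
    using exists_norming_functional[of x0] by blast
  define G where "G y = Complex (g y) (- g (\<i> *\<^sub>C y))" for y
  have lin: "clinear G"
    unfolding G_def by (rule clinear_complexification[OF g(1)])
  have bound: "cmod (G x) \<le> norm x" for x
    by (rule cmod_le_norm_if_Re_le_norm[OF lin]) (use g(2) in \<open>simp add: G_def abs_le_iff\<close>)
  have "(norm x0)\<^sup>2 + (Im (G x0))\<^sup>2 \<le> (norm x0)\<^sup>2"
    using power_mono[OF bound[of x0] norm_ge_zero, of 2] g(3) by (simp add: cmod_power2 G_def)
  then have "G x0 = complex_of_real (norm x0)"
    using g(3) by (simp add: complex_eq_iff G_def)
  with lin bound show thesis
    by (rule that)
qed

lemma star_normedD:
  assumes "star_normed invol"
  shows star_normed_add: "invol (x + y) = invol x + invol y"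
    and star_normed_scaleC: "invol (c *\<^sub>C x) = cnj c *\<^sub>C invol x"
    and star_normed_involutive: "invol (invol x) = x"
    and star_normed_norm: "norm (invol x) = norm x"
  using assms unfolding star_normed_def by blast+

lemma dual_star_eq_iff: "dual_star invol f = f \<longleftrightarrow> (\<forall>y. cnj (f (invol y)) = f y)"
  by (auto simp: dual_star_def fun_eq_iff)

lemma hermitian_selfadjoint_cnj:
  assumes "dual_star invol f = f" and "invol e = e"
  shows "cnj (f e) = f e"
  using assms by (metis dual_star_eq_iff)

lemma hermitian_decomposition:
  assumes st: "star_normed invol" and G: "clinear G" "\<And>y. cmod (G y) \<le> norm y"
  obtains H1 H2 where "clinear H1" "clinear H2"
    "dual_star invol H1 = H1" "dual_star invol H2 = H2"
    "\<And>y. cmod (H1 y) \<le> norm y" "\<And>y. cmod (H2 y) \<le> norm y"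
    "\<And>y. G y = H1 y + \<i> * H2 y"
proof
  let ?G' = "\<lambda>y. cnj (G (invol y))"
  have sum_le: "cmod (G y) + cmod (?G' y) \<le> 2 * norm y" for y
    using G(2)[of y] G(2)[of "invol y"] by (simp add: star_normed_norm[OF st])
  note simps = star_normedD[OF st] clinearD[OF G(1)] dual_star_eq_iff clinear_def
  show "clinear (\<lambda>y. (G y + ?G' y) / 2)" "clinear (\<lambda>y. (G y - ?G' y) / (2 * \<i>))"
    "dual_star invol (\<lambda>y. (G y + ?G' y) / 2) = (\<lambda>y. (G y + ?G' y) / 2)"
    "dual_star invol (\<lambda>y. (G y - ?G' y) / (2 * \<i>)) = (\<lambda>y. (G y - ?G' y) / (2 * \<i>))"
    "G y = (G y + ?G' y) / 2 + \<i> * ((G y - ?G' y) / (2 * \<i>))" for y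
    by (simp_all add: simps field_simps)
  show "cmod ((G y + ?G' y) / 2) \<le> norm y" for y
    using norm_triangle_ineq[of "G y" "?G' y"] sum_le[of y] by (simp add: norm_divide)
  show "cmod ((G y - ?G' y) / (2 * \<i>)) \<le> norm y" for y
    using norm_triangle_ineq4[of "G y" "?G' y"] sum_le[of y] by (simp add: norm_divide norm_mult)
qed

lemma exists_hermitian_half_norming_functional:
  assumes "star_normed invol"
  obtains H where "clinear H" "dual_star invol H = H" "\<And>y. cmod (H y) \<le> norm y"
    "norm v \<le> 2 * cmod (H v)"
proof -
  obtain G where G: "clinear G" "\<And>y. cmod (G y) \<le> norm y" "G v = complex_of_real (norm v)"
    using exists_complex_norming_functional[of v] by blast
  obtain H1 H2 where H: "clinear H1" "clinear H2" "dual_star invol H1 = H1" "dual_star invol H2 = H2"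
    "\<And>y. cmod (H1 y) \<le> norm y" "\<And>y. cmod (H2 y) \<le> norm y" and GH: "G v = H1 v + \<i> * H2 v"
    using hermitian_decomposition[OF assms G(1,2)] by metis
  have "norm v \<le> cmod (H1 v) + cmod (H2 v)"
    using norm_triangle_ineq[of "H1 v" "\<i> * H2 v"] G(3) GH by (simp add: norm_mult)
  then consider "norm v \<le> 2 * cmod (H1 v)" | "norm v \<le> 2 * cmod (H2 v)"
    by linarith
  then show thesis
    by cases (use that H in blast)+
qed

lemma exists_hermitian_norming_functional_selfadjoint:
  assumes "star_normed invol" and "invol e = e"
  obtains H where "clinear H" "dual_star invol H = H" "\<And>y. cmod (H y) \<le> norm y"
    "H e = complex_of_real (norm e)"
proof -
  obtain G where G: "clinear G" "\<And>y. cmod (G y) \<le> norm y" "G e = complex_of_real (norm e)"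
    using exists_complex_norming_functional[of e] by blast
  obtain H1 H2 where H: "clinear H1" "clinear H2" "dual_star invol H1 = H1" "dual_star invol H2 = H2"
    "\<And>y. cmod (H1 y) \<le> norm y" "\<And>y. cmod (H2 y) \<le> norm y" and GH: "G e = H1 e + \<i> * H2 e"
    using hermitian_decomposition[OF assms(1) G(1,2)] by metis
  have "cnj (H1 e) = H1 e" "cnj (H2 e) = H2 e"
    using hermitian_selfadjoint_cnj[OF H(3) assms(2)] hermitian_selfadjoint_cnj[OF H(4) assms(2)] .
  then have "H1 e = complex_of_real (norm e)"
    using G(3) GH by (simp add: complex_eq_iff)
  then show thesis
    using that H by blast
qed

section \<open>The sets \<open>S\<^sub>\<epsilon>\<close> and their polars\<close>

lemma bounded_cfunctional_iff:
  "bounded_cfunctional f \<longleftrightarrow> clinear f \<and> (\<exists>K. \<forall>x. cmod (f x) \<le> norm x * K)"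
  unfolding bounded_cfunctional_def clinear_def by blast

lemma bounded_cfunctional_imp_bounded_linear:
  assumes "bounded_cfunctional f"
  shows "bounded_linear f"
proof -
  obtain K where f: "clinear f" and K: "\<And>x. cmod (f x) \<le> norm x * K"
    using assms unfolding bounded_cfunctional_iff by blast
  show ?thesis
  proof (rule bounded_linear_intro[OF clinear_add[OF f] _ K])
    show "f (r *\<^sub>R x) = r *\<^sub>R f x" for r x
      by (simp add: scaleR_scaleC clinear_scaleC[OF f] scaleR_conv_of_real)
  qed
qed

lemma S_eps_memD:
  assumes "f \<in> S_eps invol e \<epsilon>"
  shows S_eps_clinear: "clinear f"
    and S_eps_hermitian: "dual_star invol f = f"
    and S_eps_unit: "f e = 1"
    and S_eps_bound: "cmod (f y) \<le> \<epsilon> * norm y"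
    and S_eps_radius_nonneg: "0 \<le> \<epsilon>"
proof -
  have bf: "bounded_cfunctional f" and onorm_le: "onorm f \<le> \<epsilon>"
    using assms unfolding S_eps_def herm_dual_e_def herm_dual_def dual_ball_def by auto
  show "clinear f"
    using bf unfolding bounded_cfunctional_iff by blast
  show "dual_star invol f = f" "f e = 1"
    using assms unfolding S_eps_def herm_dual_e_def herm_dual_def by auto
  have "cmod (f y) \<le> onorm f * norm y"
    using onorm[OF bounded_cfunctional_imp_bounded_linear[OF bf]] by simp
  then show "cmod (f y) \<le> \<epsilon> * norm y"
    by (meson onorm_le mult_right_mono norm_ge_zero order_trans)
  show "0 \<le> \<epsilon>"
    using onorm_pos_le[OF bounded_cfunctional_imp_bounded_linear[OF bf]] onorm_le by linarith
qed

lemma S_eps_memI: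
  assumes "clinear f" "dual_star invol f = f" "f e = 1" "0 \<le> \<epsilon>"
    and bound: "\<And>y. cmod (f y) \<le> \<epsilon> * norm y"
  shows "f \<in> S_eps invol e \<epsilon>"
proof -
  have "bounded_cfunctional f"
    unfolding bounded_cfunctional_iff using assms(1) bound by (metis mult.commute)
  moreover have "onorm f \<le> \<epsilon>"
    using bound assms(4) by (intro onorm_bound) simp_all
  ultimately show ?thesis
    using assms(1-3)
    unfolding S_eps_def herm_dual_e_def herm_dual_def dual_ball_def by auto
qed

lemma S_eps_mono:
  assumes "\<delta> \<le> \<epsilon>"
  shows "S_eps invol e \<delta> \<subseteq> S_eps invol e \<epsilon>"
  using assms unfolding S_eps_def dual_ball_def by auto

lemma S_eps_inverse_norm_nonempty:
  assumes "star_normed invol" and "invol e = e" and "e \<noteq> 0"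
  obtains F where "F \<in> S_eps invol e (1 / norm e)"
proof -
  obtain H where H: "clinear H" "dual_star invol H = H" "\<And>y. cmod (H y) \<le> norm y"
    "H e = complex_of_real (norm e)"
    using exists_hermitian_norming_functional_selfadjoint[OF assms(1,2)] by blast
  have "(\<lambda>y. H y / complex_of_real (norm e)) \<in> S_eps invol e (1 / norm e)"
  proof (rule S_eps_memI)
    show "clinear (\<lambda>y. H y / complex_of_real (norm e))"
      using H(1) by (simp add: clinear_def add_divide_distrib)
    show "dual_star invol (\<lambda>y. H y / complex_of_real (norm e)) = (\<lambda>y. H y / complex_of_real (norm e))"
      using H(2) by (simp add: dual_star_eq_iff)
    show "H e / complex_of_real (norm e) = 1"
      using H(4) assms(3) by simp
    show "cmod (H y / complex_of_real (norm e)) \<le> 1 / norm e * norm y" for y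
      using H(3)[of y] by (simp add: norm_divide divide_right_mono)
  qed simp
  then show thesis
    by (rule that)
qed

lemma S_eps_perturbation:
  assumes e: "invol e = e" and F0: "F0 \<in> S_eps invol e \<delta>"
    and H: "clinear H" "dual_star invol H = H" "\<And>y. cmod (H y) \<le> norm y"
    and t: "0 \<le> t" and \<epsilon>: "\<delta> + t * (1 + \<delta> * norm e) \<le> \<epsilon>"
  shows "(\<lambda>y. F0 y + complex_of_real t * (H y - H e * F0 y)) \<in> S_eps invol e \<epsilon>"
proof (rule S_eps_memI)
  have \<delta>: "0 \<le> \<delta>"
    using S_eps_radius_nonneg[OF F0] .
  show "clinear (\<lambda>y. F0 y + complex_of_real t * (H y - H e * F0 y))"
    using S_eps_clinear[OF F0] H(1) by (simp add: clinear_def algebra_simps)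
  show "dual_star invol (\<lambda>y. F0 y + complex_of_real t * (H y - H e * F0 y)) =
      (\<lambda>y. F0 y + complex_of_real t * (H y - H e * F0 y))"
    using S_eps_hermitian[OF F0] H(2) hermitian_selfadjoint_cnj[OF H(2) e]
    by (simp add: dual_star_eq_iff)
  show "F0 e + complex_of_real t * (H e - H e * F0 e) = 1"
    using S_eps_unit[OF F0] by simp
  have "0 \<le> t * (1 + \<delta> * norm e)"
    using \<delta> t by simp
  then show "0 \<le> \<epsilon>"
    using \<delta> \<epsilon> by linarith
  show "cmod (F0 y + complex_of_real t * (H y - H e * F0 y)) \<le> \<epsilon> * norm y" for y
  proof -
    have F0y: "cmod (F0 y) \<le> \<delta> * norm y"
      using S_eps_bound[OF F0] .
    have "cmod (H y - H e * F0 y) \<le> cmod (H y) + cmod (H e) * cmod (F0 y)"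
      using norm_triangle_ineq4[of "H y" "H e * F0 y"] by (simp add: norm_mult)
    also have "\<dots> \<le> norm y + norm e * (\<delta> * norm y)"
      using H(3) F0y by (intro add_mono mult_mono) auto
    finally have "cmod (H y - H e * F0 y) \<le> (1 + \<delta> * norm e) * norm y"
      by (simp add: algebra_simps)
    then have "cmod (F0 y + complex_of_real t * (H y - H e * F0 y))
        \<le> \<delta> * norm y + t * ((1 + \<delta> * norm e) * norm y)"
      using norm_triangle_ineq[of "F0 y" "complex_of_real t * (H y - H e * F0 y)"] F0y t
      by (simp add: norm_mult) (meson add_mono mult_left_mono order_trans)
    also have "\<dots> = (\<delta> + t * (1 + \<delta> * norm e)) * norm y"
      by (simp add: algebra_simps)
    also have "\<dots> \<le> \<epsilon> * norm y"
      using \<epsilon> by (rule mult_right_mono) simp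
    finally show ?thesis .
  qed
qed

lemma norm_le_if_mem_abs_polar_S_eps:
  assumes st: "star_normed invol" and e: "invol e = e" and F0: "F0 \<in> S_eps invol e \<delta>"
    and t: "0 < t" and \<epsilon>: "\<delta> + t * (1 + \<delta> * norm e) \<le> \<epsilon>"
    and v: "v \<in> abs_polar (S_eps invol e \<epsilon>)"
  shows "norm v \<le> 2 * (2 + t * norm e) / t"
proof -
  obtain H where H: "clinear H" "dual_star invol H = H" "\<And>y. cmod (H y) \<le> norm y"
    and Hv: "norm v \<le> 2 * cmod (H v)"
    using exists_hermitian_half_norming_functional[OF st] by blast
  define F where "F y = F0 y + complex_of_real t * (H y - H e * F0 y)" for y
  have "F \<in> S_eps invol e \<epsilon>"
    unfolding F_def using S_eps_perturbation[OF e F0 H _ \<epsilon>] t by simp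
  then have Fv: "cmod (F v) \<le> 1"
    using v unfolding abs_polar_def by blast
  have "0 \<le> t * (1 + \<delta> * norm e)"
    using S_eps_radius_nonneg[OF F0] t by simp
  then have "\<delta> \<le> \<epsilon>"
    using \<epsilon> by linarith
  then have F0v: "cmod (F0 v) \<le> 1"
    using v F0 S_eps_mono unfolding abs_polar_def by blast
  have "complex_of_real t * H v = F v - F0 v * (1 - complex_of_real t * H e)"
    by (simp add: F_def algebra_simps)
  then have "t * cmod (H v) = cmod (F v - F0 v * (1 - complex_of_real t * H e))"
    using t by (metis abs_of_pos norm_mult norm_of_real)
  also have "\<dots> \<le> cmod (F v) + cmod (F0 v) * cmod (1 - complex_of_real t * H e)"
    using norm_triangle_ineq4[of "F v" "F0 v * (1 - complex_of_real t * H e)"]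
    by (simp add: norm_mult)
  also have "\<dots> \<le> 1 + 1 * (1 + t * norm e)"
  proof -
    have "cmod (1 - complex_of_real t * H e) \<le> 1 + cmod (complex_of_real t * H e)"
      using norm_triangle_ineq4[of 1 "complex_of_real t * H e"] by simp
    also have "\<dots> \<le> 1 + t * norm e"
      using H(3)[of e] t by (simp add: norm_mult mult_left_mono)
    finally show ?thesis
      using Fv F0v by (intro add_mono mult_mono) auto
  qed
  finally have "2 * (t * cmod (H v)) \<le> 2 * (2 + t * norm e)"
    by simp
  moreover have "t * norm v \<le> 2 * (t * cmod (H v))"
    using mult_left_mono[OF Hv, of t] t by (simp add: ac_simps)
  ultimately have "t * norm v \<le> 2 * (2 + t * norm e)"
    by (rule order_trans[rotated])
  then show ?thesis
    using t by (simp add: field_simps)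
qed

lemma cball_subset_scaled_abs_polar_S_eps:
  fixes invol :: "'v::complex_normed_vector \<Rightarrow> 'v"
  assumes "0 < \<epsilon>"
  shows "cball 0 1 \<subseteq> (\<lambda>v. \<epsilon> *\<^sub>R v) ` abs_polar (S_eps invol e \<epsilon>)"
proof
  fix x :: 'v
  assume x: "x \<in> cball 0 1"
  have "(1 / \<epsilon>) *\<^sub>R x \<in> abs_polar (S_eps invol e \<epsilon>)"
    unfolding abs_polar_def
  proof (intro CollectI ballI)
    fix f
    assume "f \<in> S_eps invol e \<epsilon>"
    then have "cmod (f ((1 / \<epsilon>) *\<^sub>R x)) \<le> \<epsilon> * norm ((1 / \<epsilon>) *\<^sub>R x)"
      by (rule S_eps_bound)
    also have "\<dots> \<le> 1"
      using assms x by simp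
    finally show "cmod (f ((1 / \<epsilon>) *\<^sub>R x)) \<le> 1" .
  qed
  moreover have "x = \<epsilon> *\<^sub>R ((1 / \<epsilon>) *\<^sub>R x)"
    using assms by simp
  ultimately show "x \<in> (\<lambda>v. \<epsilon> *\<^sub>R v) ` abs_polar (S_eps invol e \<epsilon>)"
    by blast
qed

theorem theorem4p3:
  fixes invol :: "'v::complex_normed_vector \<Rightarrow> 'v" and e :: 'v and \<epsilon> :: real
  assumes "star_normed invol"
    and "is_unit invol e"
    and "\<epsilon> > 1 / norm e"
  shows "\<exists>r R. r > 0 \<and> R > 0 \<and>
           (\<lambda>v. r *\<^sub>R v) ` abs_polar (S_eps invol e \<epsilon>) \<subseteq> cball 0 1 \<and>
           cball 0 1 \<subseteq> (\<lambda>v. R *\<^sub>R v) ` abs_polar (S_eps invol e \<epsilon>)"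
proof -
  have e: "e \<noteq> 0" "invol e = e"
    using assms(2) unfolding is_unit_def by auto
  define \<delta> where "\<delta> = 1 / norm e"
  obtain F0 where F0: "F0 \<in> S_eps invol e \<delta>"
    using S_eps_inverse_norm_nonempty[OF assms(1) e(2,1)] unfolding \<delta>_def by blast
  define t where "t = (\<epsilon> - \<delta>) / 2"
  have t: "0 < t" and radius: "\<delta> + t * (1 + \<delta> * norm e) = \<epsilon>"
    using assms(3) e(1) by (simp_all add: t_def \<delta>_def field_simps)
  define R where "R = 2 * (2 + t * norm e) / t"
  have R: "0 < R"
    using t by (simp add: R_def add_pos_nonneg)
  have "norm v \<le> R" if "v \<in> abs_polar (S_eps invol e \<epsilon>)" for v
    unfolding R_def using norm_le_if_mem_abs_polar_S_eps[OF assms(1) e(2) F0 t _ that] radius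
    by simp
  then have "(\<lambda>v. (1 / R) *\<^sub>R v) ` abs_polar (S_eps invol e \<epsilon>) \<subseteq> cball 0 1"
    using R by auto
  moreover have "0 < \<epsilon>"
    using assms(3) e(1) by (metis divide_pos_pos order.strict_trans zero_less_norm_iff zero_less_one)
  ultimately show ?thesis
    using R cball_subset_scaled_abs_polar_S_eps[of \<epsilon> invol e]
    by (intro exI[of _ "1 / R"] exI[of _ \<epsilon>]) auto
qed

end
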